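(* Let $\mathcal{H}_1,\ldots,\mathcal{H}_n$ be complex Hilbert spaces and let $A$ be a bounded self-adjoint operator on $\mathcal{H}_1\oplus\cdots\oplus\mathcal{H}_n$ with block decomposition $A=(A_{i,j}\mid i,j=1,\ldots,n)$, $A_{i,j}:\mathcal{H}_j\to\mathcal{H}_i$. Suppose reals $a_i$ ($i=1,\ldots,n$) and $a_{i,j}=a_{j,i}$ ($i\neq j$) satisfy $m_e(A_{i,i})\geqslant a_i$ for $i=1,\ldots,n$ and $\|A_{i,j}\|_e\leqslant a_{i,j}$ for all $i\neq j$. Let $M=(m_{i,j})$ be the real symmetric $n\times n$ matrix with $m_{i,i}=a_i$ and $m_{i,j}=-a_{i,j}$ for $i\neq j$. Then $\sigma_e(A)\subset[\lambda_{\min}(M),+\infty)$, where $\lambda_{\min}(M)$ is the minimal eigenvalue of $M$.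
   Context: For a bounded self-adjoint operator $C$ on a Hilbert space, $m_e(C)$ is the supremum of all real $m$ for which there exists a compact self-adjoint operator $K$ with $C+K\geqslant mI$. For a bounded operator $T:\mathcal{X}\to\mathcal{Y}$, $\|T\|_e=\inf\{\|T+K\|\mid K:\mathcal{X}\to\mathcal{Y}\text{ compact}\}$ is the essential norm. $\sigma_e(A)$ denotes the essential spectrum of $A$. *)

theory Defs
  imports "HOL-Analysis.Analysis"
begin

text \<open>Complex Hilbert spaces (no such notion in the distribution): a Banach space
 with a complex scalar multiplication extending the real one and a complex inner
 product (antilinear in the first, linear in the second argument) inducing the norm.\<close>
class complex_hilbert = banach +
  fixes scaleC :: "complex \<Rightarrow> 'a \<Rightarrow> 'a"
    and cinner :: "'a \<Rightarrow> 'a \<Rightarrow> complex"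
  assumes scaleC_add_right: "scaleC c (x + y) = scaleC c x + scaleC c y"
    and scaleC_add_left: "scaleC (c + d) x = scaleC c x + scaleC d x"
    and scaleC_scaleC: "scaleC c (scaleC d x) = scaleC (c * d) x"
    and scaleC_one: "scaleC 1 x = x"
    and scaleC_of_real: "scaleC (complex_of_real r) x = scaleR r x"
    and cinner_conj: "cinner x y = cnj (cinner y x)"
    and cinner_add_left: "cinner (x + y) z = cinner x z + cinner y z"
    and cinner_scaleC_left: "cinner (scaleC c x) y = cnj c * cinner x y"
    and norm_cinner: "complex_of_real ((norm x)^2) = cinner x x"

definition clinear_on :: "'a::complex_hilbert set \<Rightarrow> 'a set \<Rightarrow> ('a \<Rightarrow> 'a) \<Rightarrow> bool" where
  "clinear_on V W T \<longleftrightarrow> (\<forall>x\<in>V. T x \<in> W) \<and> (\<forall>x\<in>V. \<forall>y\<in>V. T (x + y) = T x + T y)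
     \<and> (\<forall>c. \<forall>x\<in>V. T (scaleC c x) = scaleC c (T x))"

definition bounded_on :: "'a::complex_hilbert set \<Rightarrow> 'a set \<Rightarrow> ('a \<Rightarrow> 'a) \<Rightarrow> bool" where
  "bounded_on V W T \<longleftrightarrow> clinear_on V W T \<and> (\<exists>C. \<forall>x\<in>V. norm (T x) \<le> C * norm x)"

definition compact_op :: "'a::complex_hilbert set \<Rightarrow> 'a set \<Rightarrow> ('a \<Rightarrow> 'a) \<Rightarrow> bool" where
  "compact_op V W K \<longleftrightarrow> clinear_on V W K \<and> compact (closure (K ` {x\<in>V. norm x \<le> 1}))"

definition opnorm_on :: "'a::complex_hilbert set \<Rightarrow> ('a \<Rightarrow> 'a) \<Rightarrow> real" where
  "opnorm_on V T = Sup ((\<lambda>x. norm (T x)) ` {x\<in>V. norm x \<le> 1})"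

definition ess_norm :: "'a::complex_hilbert set \<Rightarrow> 'a set \<Rightarrow> ('a \<Rightarrow> 'a) \<Rightarrow> real" where
  "ess_norm V W T = Inf ((\<lambda>K. opnorm_on V (\<lambda>x. T x + K x)) ` {K. compact_op V W K})"

definition selfadj_on :: "'a::complex_hilbert set \<Rightarrow> ('a \<Rightarrow> 'a) \<Rightarrow> bool" where
  "selfadj_on V T \<longleftrightarrow> (\<forall>x\<in>V. \<forall>y\<in>V. cinner (T x) y = cinner x (T y))"

text \<open>m_e(C) for an operator C on V (as an extended real; +\<infinity> only when V = {0}).\<close>
definition ess_min :: "'a::complex_hilbert set \<Rightarrow> ('a \<Rightarrow> 'a) \<Rightarrow> ereal" where
  "ess_min V C = Sup (ereal ` {m. \<exists>K. compact_op V V K \<and> selfadj_on V K \<and>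
       (\<forall>x\<in>V. m * (norm x)^2 \<le> Re (cinner x (C x + K x)))})"

text \<open>Essential spectrum of an operator T on the whole space: z such that T - zI is
 not invertible modulo compact operators (spectrum in the Calkin algebra).\<close>
definition ess_spectrum :: "('a::complex_hilbert \<Rightarrow> 'a) \<Rightarrow> complex set" where
  "ess_spectrum T = {z. \<not> (\<exists>B K1 K2. bounded_on UNIV UNIV B \<and> compact_op UNIV UNIV K1
      \<and> compact_op UNIV UNIV K2 \<and> (\<forall>x. B (T x - scaleC z x) = x + K1 x)
      \<and> (\<forall>x. T (B x) - scaleC z (B x) = x + K2 x))}"

definition csubspace :: "'a::complex_hilbert set \<Rightarrow> bool" where
  "csubspace V \<longleftrightarrow> 0 \<in> V \<and> (\<forall>x\<in>V. \<forall>y\<in>V. x + y \<in> V) \<and> (\<forall>c. \<forall>x\<in>V. scaleC c x \<in> V)"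

definition orth_decomp :: "nat \<Rightarrow> (nat \<Rightarrow> 'a::complex_hilbert set) \<Rightarrow> bool" where
  "orth_decomp n V \<longleftrightarrow> (\<forall>i<n. closed (V i) \<and> csubspace (V i))
     \<and> (\<forall>i<n. \<forall>j<n. i \<noteq> j \<longrightarrow> (\<forall>x\<in>V i. \<forall>y\<in>V j. cinner x y = 0))
     \<and> (\<forall>x. \<exists>u. (\<forall>i<n. u i \<in> V i) \<and> x = (\<Sum>i<n. u i))"

definition proj :: "'a::complex_hilbert set \<Rightarrow> 'a \<Rightarrow> 'a" where
  "proj V x = (THE y. y \<in> V \<and> (\<forall>v\<in>V. cinner v (x - y) = 0))"

definition min_eig :: "nat \<Rightarrow> (nat \<Rightarrow> nat \<Rightarrow> real) \<Rightarrow> real" where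
  "min_eig n M = Min {\<mu>. \<exists>v::nat \<Rightarrow> real. (\<exists>i<n. v i \<noteq> 0) \<and>
      (\<forall>i<n. (\<Sum>j<n. M i j * v j) = \<mu> * v i)}"

end

theory Submission
  imports Defs "Jordan_Normal_Form.Char_Poly"
begin

text \<open>
  If \<open>Im z \<noteq> 0\<close>, self-adjointness makes \<open>\<langle>x, (A - z) x\<rangle>\<close> have imaginary part
  \<open>- Im z \<parallel>x\<parallel>\<^sup>2\<close>, so a multiple of \<open>A - z\<close> by \<open>\<plusminus>\<i>\<close> is coercive and therefore invertible
  (Lax--Milgram, via the Banach fixed point theorem); hence \<open>z\<close> is not in the essential
  spectrum.

  If \<open>z\<close> is real and below \<open>\<lambda>\<^sub>m\<^sub>i\<^sub>n(M)\<close>, fix \<open>\<epsilon> > 0\<close> and use the definitions of \<open>m\<^sub>e\<close> and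
  \<open>\<parallel>\<cdot>\<parallel>\<^sub>e\<close> to correct every block by a compact operator, so that the diagonal blocks satisfy
  \<open>Re \<langle>x, A\<^sub>i\<^sub>i x\<rangle> \<ge> (a\<^sub>i - \<epsilon>) \<parallel>x\<parallel>\<^sup>2\<close> and the off-diagonal blocks have norm at most
  \<open>a\<^sub>i\<^sub>j + \<epsilon>\<close>. With \<open>t\<^sub>i = \<parallel>P\<^sub>i x\<parallel>\<close> the form of the corrected operator is then at least
  \<open>\<Sum> m\<^sub>i\<^sub>j t\<^sub>i t\<^sub>j - n \<epsilon> \<parallel>x\<parallel>\<^sup>2 \<ge> (\<lambda>\<^sub>m\<^sub>i\<^sub>n(M) - n \<epsilon>) \<parallel>x\<parallel>\<^sup>2\<close>, the last step being the
  variational characterisation of the least eigenvalue (a minimiser of the Rayleigh quotient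
  is an eigenvector). For small \<open>\<epsilon>\<close> the corrected \<open>A - z\<close> is coercive, and a compact
  perturbation does not affect invertibility modulo compact operators.
\<close>

section \<open>Complex inner products\<close>

lemma cinner_add_right: "cinner (x::'a::complex_hilbert) (y + z) = cinner x y + cinner x z"
  by (metis cinner_conj cinner_add_left complex_cnj_add)

lemma cinner_scaleC_right: "cinner (x::'a::complex_hilbert) (scaleC c y) = c * cinner x y"
  by (metis cinner_conj cinner_scaleC_left complex_cnj_cnj complex_cnj_mult)

lemma cinner_zero_left [simp]: "cinner (0::'a::complex_hilbert) y = 0"
  using cinner_add_left[of "0::'a" 0 y] by simp

lemma cinner_zero_right [simp]: "cinner (x::'a::complex_hilbert) 0 = 0"
  using cinner_add_right[of x "0::'a" 0] by simp

lemma cinner_minus_right: "cinner (x::'a::complex_hilbert) (- y) = - cinner x y"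
  using cinner_add_right[of x y "- y"] by (simp add: eq_neg_iff_add_eq_0 add.commute)

lemma cinner_diff_right: "cinner (x::'a::complex_hilbert) (y - z) = cinner x y - cinner x z"
  using cinner_add_right[of x y "- z"] by (simp add: cinner_minus_right)

lemma cinner_scaleR_right: "cinner (x::'a::complex_hilbert) (scaleR r y) = of_real r * cinner x y"
  by (metis cinner_scaleC_right scaleC_of_real)

lemma cinner_scaleR_left: "cinner (scaleR r (x::'a::complex_hilbert)) y = of_real r * cinner x y"
  by (metis cinner_scaleC_left scaleC_of_real complex_cnj_complex_of_real)

lemma cinner_sum_right: "cinner (x::'a::complex_hilbert) (sum f A) = (\<Sum>i\<in>A. cinner x (f i))"
  by (induction A rule: infinite_finite_induct) (auto simp: cinner_add_right)

lemma cinner_sum_left: "cinner (sum f A) (x::'a::complex_hilbert) = (\<Sum>i\<in>A. cinner (f i) x)"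
  by (induction A rule: infinite_finite_induct) (auto simp: cinner_add_left)

lemma Re_cinner_self: "Re (cinner (x::'a::complex_hilbert) x) = (norm x)^2"
  by (metis norm_cinner Re_complex_of_real)

lemma scaleC_zero_right [simp]: "scaleC c (0::'a::complex_hilbert) = 0"
  using scaleC_add_right[of c "0::'a" 0] by simp

lemma scaleC_zero_left [simp]: "scaleC 0 (x::'a::complex_hilbert) = 0"
  using scaleC_of_real[of 0 x] by simp

lemma scaleC_minus_right: "scaleC c (- x::'a::complex_hilbert) = - scaleC c x"
  using scaleC_add_right[of c x "- x"] by (simp add: eq_neg_iff_add_eq_0 add.commute)

lemma scaleC_diff_right: "scaleC c (x - y::'a::complex_hilbert) = scaleC c x - scaleC c y"
  using scaleC_add_right[of c x "- y"] by (simp add: scaleC_minus_right)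

lemma scaleC_sum_right: "scaleC c (sum f A) = (\<Sum>i\<in>A. scaleC c (f i::'a::complex_hilbert))"
  by (induction A rule: infinite_finite_induct) (auto simp: scaleC_add_right)

lemma scaleC_left_cancel: "c \<noteq> 0 \<Longrightarrow> scaleC c (x::'a::complex_hilbert) = scaleC c y \<Longrightarrow> x = y"
  by (metis scaleC_scaleC scaleC_one left_inverse)

lemma norm_scaleC: "norm (scaleC c (x::'a::complex_hilbert)) = cmod c * norm x"
proof -
  have "complex_of_real ((norm (scaleC c x))^2) = cnj c * c * cinner x x"
    by (simp only: norm_cinner cinner_scaleC_left cinner_scaleC_right) (simp add: algebra_simps)
  also have "\<dots> = complex_of_real ((cmod c)^2) * complex_of_real ((norm x)^2)"
    by (simp only: norm_cinner complex_norm_square) (simp add: mult.commute)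
  also have "\<dots> = complex_of_real ((cmod c * norm x)^2)"
    by (simp add: power_mult_distrib)
  finally have "(norm (scaleC c x))^2 = (cmod c * norm x)^2"
    using of_real_eq_iff by blast
  then show ?thesis
    by (simp add: power2_eq_iff_nonneg)
qed

lemma norm_add_squared:
  "(norm (x + y::'a::complex_hilbert))^2 = (norm x)^2 + (norm y)^2 + 2 * Re (cinner x y)"
proof -
  have "complex_of_real ((norm (x + y))^2) = cinner x x + cinner y y + (cinner x y + cinner y x)"
    by (simp only: norm_cinner cinner_add_left cinner_add_right algebra_simps)
  then have "(norm (x + y))^2 = Re (cinner x x) + Re (cinner y y) + Re (cinner x y + cnj (cinner x y))"
    by (metis Re_complex_of_real cinner_conj plus_complex.sel(1))
  then show ?thesis
    by (simp add: Re_cinner_self)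
qed

lemma norm_diff_squared:
  "(norm (x - y::'a::complex_hilbert))^2 = (norm x)^2 + (norm y)^2 - 2 * Re (cinner x y)"
  using norm_add_squared[of x "- y"] by (simp add: cinner_minus_right)

lemma Re_cinner_le: "Re (cinner (x::'a::complex_hilbert) y) \<le> norm x * norm y"
proof (cases "x = 0 \<or> y = 0")
  case False
  then have pos: "norm x * norm y > 0"
    by simp
  have "0 \<le> (norm (scaleR (norm y) x - scaleR (norm x) y))^2"
    by simp
  also have "\<dots> = 2 * (norm x * norm y) * (norm x * norm y - Re (cinner x y))"
    unfolding norm_diff_squared by (simp add: cinner_scaleR_right cinner_scaleR_left power2_eq_square algebra_simps)
  finally show ?thesis
    using pos by (simp add: zero_le_mult_iff)
qed auto

lemma Re_cinner_ge: "- (norm x * norm y) \<le> Re (cinner (x::'a::complex_hilbert) y)"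
  using Re_cinner_le[of x "- y"] by (simp add: cinner_minus_right)

section \<open>Bounded and compact operators\<close>

definition clinear :: "('a::complex_hilbert \<Rightarrow> 'a) \<Rightarrow> bool" where
  "clinear T \<longleftrightarrow> (\<forall>x y. T (x + y) = T x + T y) \<and> (\<forall>c x. T (scaleC c x) = scaleC c (T x))"

lemma clinear_on_UNIV_iff: "clinear_on UNIV UNIV T \<longleftrightarrow> clinear T"
  unfolding clinear_on_def clinear_def by auto

lemma clinear_add: "clinear T \<Longrightarrow> T (x + y) = T x + T y"
  unfolding clinear_def by blast

lemma clinear_scaleC: "clinear T \<Longrightarrow> T (scaleC c x) = scaleC c (T x)"
  unfolding clinear_def by blast

lemma clinear_scaleR: "clinear T \<Longrightarrow> T (scaleR r x) = scaleR r (T x)"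
  by (metis clinear_scaleC scaleC_of_real)

lemma clinear_zero: "clinear T \<Longrightarrow> T 0 = 0"
  using clinear_scaleC[of T 0 0] by simp

lemma clinear_diff: "clinear T \<Longrightarrow> T (x - y) = T x - T y"
  using clinear_add[of T "x - y" y] by (simp add: algebra_simps)

lemma clinear_sum: "clinear T \<Longrightarrow> T (sum f A) = (\<Sum>i\<in>A. T (f i))"
  by (induction A rule: infinite_finite_induct) (auto simp: clinear_zero clinear_add)

abbreviation bounded_op :: "('a::complex_hilbert \<Rightarrow> 'a) \<Rightarrow> bool" where
  "bounded_op \<equiv> bounded_on UNIV UNIV"

lemma bounded_op_iff: "bounded_op T \<longleftrightarrow> clinear T \<and> (\<exists>C. \<forall>x. norm (T x) \<le> C * norm x)"
  unfolding bounded_on_def clinear_on_UNIV_iff by simp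

lemma bounded_op_clinear: "bounded_op T \<Longrightarrow> clinear T"
  by (simp add: bounded_op_iff)

lemma bounded_op_bound: "bounded_op T \<Longrightarrow> \<exists>C. \<forall>x. norm (T x) \<le> C * norm x"
  by (simp add: bounded_op_iff)

lemma bounded_op_pos_bound:
  assumes "bounded_op T"
  shows "\<exists>C>0. \<forall>x. norm (T x) \<le> C * norm x"
proof -
  obtain C where C: "\<And>x. norm (T x) \<le> C * norm x"
    using bounded_op_bound[OF assms] by blast
  have "norm (T x) \<le> max C 1 * norm x" for x
    by (rule order_trans[OF C mult_right_mono]) auto
  then show ?thesis
    by (intro exI[of _ "max C 1"]) auto
qed

lemma bounded_op_bounded_linear:
  assumes "bounded_op T"
  shows "bounded_linear T"
proof -
  obtain C where "\<And>x. norm (T x) \<le> C * norm x"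
    using bounded_op_bound[OF assms] by blast
  then show ?thesis
    using bounded_op_clinear[OF assms]
    by (intro bounded_linear_intro[of _ C]) (auto simp: clinear_add clinear_scaleR mult.commute)
qed

lemma bounded_op_add:
  assumes "bounded_op S" "bounded_op T"
  shows "bounded_op (\<lambda>x. S x + T x)"
proof -
  obtain C D where C: "\<And>x. norm (S x) \<le> C * norm x" and D: "\<And>x. norm (T x) \<le> D * norm x"
    using bounded_op_bound[OF assms(1)] bounded_op_bound[OF assms(2)] by blast
  have "norm (S x + T x) \<le> (C + D) * norm x" for x
    using norm_triangle_le[OF add_mono[OF C D]] by (simp add: algebra_simps)
  moreover have "clinear (\<lambda>x. S x + T x)"
    using assms by (auto simp: clinear_def bounded_op_iff scaleC_add_right)
  ultimately show ?thesis
    by (auto simp: bounded_op_iff)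
qed

lemma bounded_op_scaleC:
  assumes "bounded_op T"
  shows "bounded_op (\<lambda>x. scaleC c (T x))"
proof -
  obtain C where C: "\<And>x. norm (T x) \<le> C * norm x"
    using bounded_op_bound[OF assms] by blast
  have "norm (scaleC c (T x)) \<le> (cmod c * C) * norm x" for x
    using mult_left_mono[OF C, of "cmod c" x] by (simp add: norm_scaleC mult.assoc)
  moreover have "clinear (\<lambda>x. scaleC c (T x))"
    using assms by (auto simp: clinear_def bounded_op_iff scaleC_add_right scaleC_scaleC mult.commute)
  ultimately show ?thesis
    by (auto simp: bounded_op_iff)
qed

lemma bounded_op_ident: "bounded_op (\<lambda>x. x)"
  by (auto simp: bounded_op_iff clinear_def intro: exI[of _ 1])

lemma bounded_op_diff:
  assumes "bounded_op S" "bounded_op T"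
  shows "bounded_op (\<lambda>x. S x - T x)"
  using bounded_op_add[OF assms(1) bounded_op_scaleC[OF assms(2), of "-1"]]
  by (simp add: scaleC_of_real[of "-1", simplified])

lemma bounded_op_compose:
  assumes "bounded_op S" "bounded_op T"
  shows "bounded_op (\<lambda>x. S (T x))"
proof -
  obtain C where C: "C > 0" "\<And>x. norm (S x) \<le> C * norm x"
    using bounded_op_pos_bound[OF assms(1)] by blast
  obtain D where D: "\<And>x. norm (T x) \<le> D * norm x"
    using bounded_op_bound[OF assms(2)] by blast
  have "norm (S (T x)) \<le> (C * D) * norm x" for x
    using order_trans[OF C(2) mult_left_mono[OF D]] C(1) by (simp add: mult.assoc)
  moreover have "clinear (\<lambda>x. S (T x))"
    using assms by (auto simp: clinear_def bounded_op_iff)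
  ultimately show ?thesis
    by (auto simp: bounded_op_iff)
qed

abbreviation compact_operator :: "('a::complex_hilbert \<Rightarrow> 'a) \<Rightarrow> bool" where
  "compact_operator \<equiv> compact_op UNIV UNIV"

lemma compact_operator_iff:
  "compact_operator K \<longleftrightarrow> clinear K \<and> compact (closure (K ` {x. norm x \<le> 1}))"
  unfolding compact_op_def clinear_on_UNIV_iff by simp

lemma compact_closure_subset:
  assumes "S \<subseteq> T" "compact (T::'a::metric_space set)"
  shows "compact (closure S)"
proof -
  have "closure S \<subseteq> T"
    using assms by (meson closure_minimal compact_imp_closed)
  then have "T \<inter> closure S = closure S"
    by blast
  then show ?thesis
    using compact_Int_closed[OF assms(2) closed_closure[of S]] by simp
qed

lemma homogeneous_bound:
  assumes hom: "\<And>x r. x \<in> V \<Longrightarrow> scaleR r x \<in> V \<and> T (scaleR r x) = scaleR r (T x)"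
    and unit: "\<And>x. x \<in> V \<Longrightarrow> norm x \<le> 1 \<Longrightarrow> norm (T x) \<le> B"
    and x: "x \<in> V"
  shows "norm (T x) \<le> B * norm x"
proof (cases "x = 0")
  case True
  then show ?thesis
    using hom[OF x, of 0] by simp
next
  case False
  define y where "y = scaleR (1 / norm x) x"
  have y: "y \<in> V" "norm y \<le> 1"
    using hom[OF x, of "1 / norm x"] False by (simp_all add: y_def)
  have "T x = scaleR (norm x) (T y)"
    using hom[OF y(1), of "norm x"] False by (simp add: y_def)
  then show ?thesis
    using mult_left_mono[OF unit[OF y], of "norm x"] by (simp add: mult.commute)
qed

lemma compact_op_bounded:
  assumes K: "compact_op V W K" and V: "\<And>x r. x \<in> V \<Longrightarrow> scaleR r x \<in> V"
  shows "\<exists>C. \<forall>x\<in>V. norm (K x) \<le> C * norm x"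
proof -
  have "bounded (K ` {x\<in>V. norm x \<le> 1})"
    using K unfolding compact_op_def by (metis bounded_subset closure_subset compact_imp_bounded)
  then obtain B where B: "\<And>x. x \<in> V \<Longrightarrow> norm x \<le> 1 \<Longrightarrow> norm (K x) \<le> B"
    by (auto simp: bounded_iff)
  have "K (scaleR r x) = scaleR r (K x)" if "x \<in> V" for x r
    using K that unfolding compact_op_def clinear_on_def by (metis scaleC_of_real)
  then have "\<forall>x\<in>V. norm (K x) \<le> B * norm x"
    using V by (intro ballI homogeneous_bound[OF _ B]) auto
  then show ?thesis
    by blast
qed

lemma compact_operator_imp_bounded_op:
  assumes "compact_operator K"
  shows "bounded_op K"
  using assms compact_op_bounded[OF assms] unfolding bounded_on_def compact_op_def by blast

lemma compact_op_zero:
  fixes V W :: "'a::complex_hilbert set"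
  assumes "0 \<in> W"
  shows "compact_op V W (\<lambda>x. 0)"
proof -
  have "compact (closure ((\<lambda>x. 0::'a) ` {x \<in> V. norm x \<le> 1}))"
    by (rule compact_closure_subset[of _ "{0}"]) auto
  then show ?thesis
    using assms unfolding compact_op_def clinear_on_def by simp
qed

lemma closure_image_memI: "x \<in> A \<Longrightarrow> f x \<in> closure (f ` A)"
  by (rule closure_subset[THEN subsetD, OF imageI])

lemma compact_operator_add:
  assumes "compact_operator K" "compact_operator L"
  shows "compact_operator (\<lambda>x. K x + L x)"
proof -
  let ?B = "{x::'a. norm x \<le> 1}"
  have sub: "(\<lambda>x. K x + L x) ` ?B \<subseteq> {a + b |a b. a \<in> closure (K ` ?B) \<and> b \<in> closure (L ` ?B)}"
    by (blast intro: closure_image_memI)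
  have cpt: "compact {a + b |a b. a \<in> closure (K ` ?B) \<and> b \<in> closure (L ` ?B)}"
    using assms by (intro compact_sums) (simp_all add: compact_operator_iff)
  have "clinear (\<lambda>x. K x + L x)"
    using assms by (simp add: clinear_def compact_operator_iff scaleC_add_right)
  then show ?thesis
    unfolding compact_operator_iff using compact_closure_subset[OF sub cpt] by blast
qed

lemma compact_operator_sum:
  "(\<And>i. i \<in> I \<Longrightarrow> compact_operator (K i)) \<Longrightarrow> compact_operator (\<lambda>x. \<Sum>i\<in>I. K i x)"
  by (induction I rule: infinite_finite_induct) (simp_all add: compact_op_zero compact_operator_add)

lemma compact_operator_compose_left:
  assumes K: "compact_operator K" and B: "bounded_op B"
  shows "compact_operator (\<lambda>x. B (K x))"
proof -
  let ?B = "{x::'a. norm x \<le> 1}"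
  have sub: "(\<lambda>x. B (K x)) ` ?B \<subseteq> B ` closure (K ` ?B)"
    by (blast intro: closure_image_memI)
  have "compact (B ` closure (K ` ?B))"
    using K bounded_op_bounded_linear[OF B]
    by (intro compact_continuous_image linear_continuous_on) (simp_all add: compact_operator_iff)
  moreover have "clinear (\<lambda>x. B (K x))"
    using K B by (simp add: clinear_def compact_operator_iff bounded_op_iff)
  ultimately show ?thesis
    unfolding compact_operator_iff using compact_closure_subset[OF sub] by blast
qed

lemma compact_operator_compose_right:
  assumes K: "compact_operator K" and B: "bounded_op B"
  shows "compact_operator (\<lambda>x. K (B x))"
proof -
  let ?B = "{x::'a. norm x \<le> 1}"
  obtain R where R: "R > 0" "\<And>x. norm (B x) \<le> R * norm x"
    using bounded_op_pos_bound[OF B] by blast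
  have linK: "clinear K"
    using K by (simp add: compact_operator_iff)
  have sub: "(\<lambda>x. K (B x)) ` ?B \<subseteq> scaleR R ` closure (K ` ?B)"
  proof (rule image_subsetI)
    fix x :: 'a
    assume "x \<in> ?B"
    then have "norm (B x) \<le> R"
      using order_trans[OF R(2) mult_left_mono[of "norm x" 1 R]] R(1) by simp
    then have "scaleR (1 / R) (B x) \<in> ?B"
      using R(1) by (simp add: divide_le_eq)
    then have "K (scaleR (1 / R) (B x)) \<in> closure (K ` ?B)"
      by (rule closure_image_memI)
    moreover have "K (B x) = scaleR R (K (scaleR (1 / R) (B x)))"
      using R(1) by (simp add: clinear_scaleR[OF linK])
    ultimately show "K (B x) \<in> scaleR R ` closure (K ` ?B)"
      by (rule rev_image_eqI)
  qed
  have "compact (scaleR R ` closure (K ` ?B))"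
    using K by (intro compact_scaling) (simp add: compact_operator_iff)
  moreover have "clinear (\<lambda>x. K (B x))"
    using linK B by (simp add: clinear_def bounded_op_iff)
  ultimately show ?thesis
    unfolding compact_operator_iff using compact_closure_subset[OF sub] by blast
qed

lemma compact_operator_uminus: "compact_operator K \<Longrightarrow> compact_operator (\<lambda>x. - K x)"
  using compact_operator_compose_left[OF _ bounded_op_scaleC[OF bounded_op_ident, of "-1"]]
  by (simp add: scaleC_of_real[of "-1", simplified])

section \<open>Coercive operators and the essential spectrum\<close>

lemma coercive_step_contraction:
  assumes C: "\<And>x. norm (F x) \<le> C * norm x" and \<delta>: "0 < \<delta>" "\<delta> \<le> C"
    and coercive: "\<And>x. \<delta> * (norm x)^2 \<le> Re (cinner x (F x))"
  shows "norm (w - scaleR (\<delta> / C^2) (F w)) \<le> sqrt (1 - \<delta>^2 / C^2) * norm w"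
proof -
  define t where "t = \<delta> / C^2"
  define q where "q = sqrt (1 - \<delta>^2 / C^2)"
  have "C > 0" "t > 0"
    using \<delta> by (simp_all add: t_def)
  have "\<delta>^2 \<le> C^2"
    using \<delta> by (intro power_mono) auto
  then have q: "0 \<le> q" "q^2 = 1 - \<delta>^2 / C^2"
    using \<open>C > 0\<close> unfolding q_def by simp_all
  have "(norm (scaleR t (F w)))^2 = t^2 * (norm (F w))^2"
    by (simp add: power_mult_distrib)
  moreover have "Re (cinner w (scaleR t (F w))) = t * Re (cinner w (F w))"
    by (simp add: cinner_scaleR_right)
  ultimately have "(norm (w - scaleR t (F w)))^2
      = (norm w)^2 + t^2 * (norm (F w))^2 - 2 * t * Re (cinner w (F w))"
    by (simp only: norm_diff_squared mult.assoc)
  also have "\<dots> \<le> (norm w)^2 + t^2 * (C * norm w)^2 - 2 * t * (\<delta> * (norm w)^2)"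
  proof -
    have "t^2 * (norm (F w))^2 \<le> t^2 * (C * norm w)^2"
      by (rule mult_left_mono[OF power_mono[OF C norm_ge_zero] zero_le_power2])
    moreover have "2 * t * (\<delta> * (norm w)^2) \<le> 2 * t * Re (cinner w (F w))"
      using \<open>t > 0\<close> by (simp add: coercive)
    ultimately show ?thesis
      by linarith
  qed
  also have "\<dots> = (1 + t^2 * C^2 - 2 * (t * \<delta>)) * (norm w)^2"
    by (simp add: power_mult_distrib algebra_simps)
  also have "1 + t^2 * C^2 - 2 * (t * \<delta>) = q^2"
    unfolding q(2) t_def using \<open>C > 0\<close> by (simp add: power2_eq_square)
  also have "q^2 * (norm w)^2 = (q * norm w)^2"
    by (simp add: power_mult_distrib)
  finally show ?thesis
    unfolding t_def q_def[symmetric] using q(1) by (rule power2_le_imp_le[OF _ mult_nonneg_nonneg]) simp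
qed

lemma coercive_op_surj:
  assumes F: "bounded_op F" and \<delta>: "\<delta> > 0"
    and coercive: "\<And>x. \<delta> * (norm x)^2 \<le> Re (cinner x (F x))"
  shows "\<exists>x. F x = y"
proof -
  obtain C0 where C0: "\<And>x. norm (F x) \<le> C0 * norm x"
    using bounded_op_bound[OF F] by blast
  define C where "C = max C0 \<delta>"
  have C: "norm (F x) \<le> C * norm x" for x
    by (rule order_trans[OF C0 mult_right_mono]) (simp_all add: C_def)
  have "\<delta> \<le> C"
    by (simp add: C_def)
  define t where "t = \<delta> / C^2"
  define q where "q = sqrt (1 - \<delta>^2 / C^2)"
  have "t > 0"
    using \<delta> \<open>\<delta> \<le> C\<close> by (simp add: t_def)
  have "0 \<le> q" "q < 1"
    using \<delta> \<open>\<delta> \<le> C\<close> by (simp_all add: q_def power_mono)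
  have "dist (x - scaleR t (F x - y)) (x' - scaleR t (F x' - y)) \<le> q * dist x x'" for x x'
    using coercive_step_contraction[OF C \<delta> \<open>\<delta> \<le> C\<close> coercive, of "x - x'"] bounded_op_clinear[OF F]
    unfolding t_def q_def by (simp add: dist_norm clinear_diff algebra_simps)
  then have "\<exists>!x. x - scaleR t (F x - y) = x"
    by (intro banach_fix_type[OF \<open>0 \<le> q\<close> \<open>q < 1\<close>]) blast
  then obtain x where "x - scaleR t (F x - y) = x"
    by blast
  then have "F x = y"
    using \<open>t > 0\<close> by simp
  then show ?thesis ..
qed

lemma coercive_op_invertible:
  assumes F: "bounded_op F" and \<delta>: "\<delta> > 0"
    and coercive: "\<And>x. \<delta> * (norm x)^2 \<le> Re (cinner x (F x))"
  obtains G where "bounded_op G" "\<And>x. G (F x) = x" "\<And>y. F (G y) = y"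
proof -
  have linF: "clinear F"
    using F by (rule bounded_op_clinear)
  have inj: "x = x'" if "F x = F x'" for x x'
  proof -
    have "\<delta> * (norm (x - x'))^2 \<le> 0"
      using coercive[of "x - x'"] that by (simp add: clinear_diff[OF linF])
    then show ?thesis
      using \<delta> by (simp add: mult_le_0_iff)
  qed
  define G where "G y = (SOME x. F x = y)" for y
  have FG: "F (G y) = y" for y
    unfolding G_def using coercive_op_surj[OF F \<delta> coercive] by (rule someI_ex)
  have GF: "G (F x) = x" for x
    using FG[of "F x"] inj by blast
  have "clinear G"
    unfolding clinear_def
    by (intro conjI allI; rule inj) (simp_all add: FG clinear_add[OF linF] clinear_scaleC[OF linF])
  moreover have "norm (G y) \<le> (1 / \<delta>) * norm y" for y
  proof -
    have "\<delta> * (norm (G y) * norm (G y)) \<le> norm (G y) * norm y"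
      using order_trans[OF coercive[of "G y"] Re_cinner_le] by (simp add: FG power2_eq_square)
    then show ?thesis
      using \<delta> by (cases "G y = 0") (simp_all add: field_simps mult.assoc)
  qed
  ultimately have "bounded_op G"
    unfolding bounded_op_iff by blast
  then show thesis
    using that GF FG by blast
qed

lemma not_in_ess_spectrum_if_coercive:
  assumes A: "bounded_op A" and K: "compact_operator K" and c: "c \<noteq> 0" and \<delta>: "\<delta> > 0"
    and coercive: "\<And>x. \<delta> * (norm x)^2 \<le> Re (c * cinner x (A x + K x - scaleC z x))"
  shows "z \<notin> ess_spectrum A"
proof -
  define F where "F x = scaleC c (A x + K x - scaleC z x)" for x
  have F: "bounded_op F"
    unfolding F_def using A compact_operator_imp_bounded_op[OF K]
    by (intro bounded_op_scaleC bounded_op_diff bounded_op_add bounded_op_ident)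
  have "\<delta> * (norm x)^2 \<le> Re (cinner x (F x))" for x
    using coercive[of x] by (simp add: F_def cinner_scaleC_right)
  then obtain G where G: "bounded_op G" "\<And>x. G (F x) = x" "\<And>y. F (G y) = y"
    using coercive_op_invertible[OF F \<delta>] by blast
  define B where "B y = G (scaleC c y)" for y
  have B: "bounded_op B"
    unfolding B_def by (rule bounded_op_compose[OF G(1) bounded_op_scaleC[OF bounded_op_ident]])
  have "B (A x - scaleC z x) = x + - B (K x)" for x
  proof -
    have "scaleC c (A x - scaleC z x) = F x - scaleC c (K x)"
      by (simp add: F_def scaleC_diff_right[symmetric] algebra_simps)
    then show ?thesis
      using G(2) bounded_op_clinear[OF G(1)] by (simp add: B_def clinear_diff)
  qed
  moreover have "A (B y) - scaleC z (B y) = y + - K (B y)" for y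
  proof -
    have "scaleC c (A (B y) + K (B y) - scaleC z (B y)) = scaleC c y"
      using G(3) by (simp add: F_def B_def)
    then have "A (B y) + K (B y) - scaleC z (B y) = y"
      by (rule scaleC_left_cancel[OF c])
    then show ?thesis
      by (simp add: algebra_simps)
  qed
  moreover have "compact_operator (\<lambda>x. - B (K x))" "compact_operator (\<lambda>y. - K (B y))"
    using K B by (simp_all add: compact_operator_uminus compact_operator_compose_left
        compact_operator_compose_right)
  ultimately show ?thesis
    unfolding ess_spectrum_def using B
    by (blast intro: exI[of _ B] exI[of _ "\<lambda>x. - B (K x)"] exI[of _ "\<lambda>y. - K (B y)"])
qed

lemma selfadj_cinner_real: "selfadj_on UNIV A \<Longrightarrow> Im (cinner x (A x)) = 0"
  unfolding selfadj_on_def by (metis cinner_conj Reals_cnj_iff complex_is_Real_iff UNIV_I)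

lemma nonreal_not_in_ess_spectrum:
  assumes A: "bounded_op A" "selfadj_on UNIV A" and z: "Im z \<noteq> 0"
  shows "z \<notin> ess_spectrum A"
proof (rule not_in_ess_spectrum_if_coercive[OF A(1) compact_op_zero])
  define c where "c = (if Im z > 0 then \<i> else - \<i>)"
  show "c \<noteq> 0"
    by (simp add: c_def)
  show "\<bar>Im z\<bar> > 0"
    using z by simp
  fix x
  have "cinner x (A x + 0 - scaleC z x) = cinner x (A x) - z * complex_of_real ((norm x)^2)"
    by (simp add: cinner_diff_right cinner_scaleC_right flip: norm_cinner)
  then show "\<bar>Im z\<bar> * (norm x)^2 \<le> Re (c * cinner x (A x + 0 - scaleC z x))"
    using selfadj_cinner_real[OF A(2), of x] by (auto simp: c_def)
qed simp

section \<open>Orthogonal decompositions\<close>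

locale orthogonal_decomposition =
  fixes n :: nat and V :: "nat \<Rightarrow> 'a::complex_hilbert set"
  assumes orth_decomp: "orth_decomp n V"
begin

abbreviation P :: "nat \<Rightarrow> 'a \<Rightarrow> 'a" where
  "P i \<equiv> proj (V i)"

lemma subspace: "i < n \<Longrightarrow> csubspace (V i)"
  using orth_decomp unfolding orth_decomp_def by blast

lemma zero_in: "i < n \<Longrightarrow> 0 \<in> V i"
  using subspace unfolding csubspace_def by blast

lemma add_in: "i < n \<Longrightarrow> x \<in> V i \<Longrightarrow> y \<in> V i \<Longrightarrow> x + y \<in> V i"
  using subspace unfolding csubspace_def by blast

lemma scaleC_in: "i < n \<Longrightarrow> x \<in> V i \<Longrightarrow> scaleC c x \<in> V i"
  using subspace unfolding csubspace_def by blast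

lemma scaleR_in: "i < n \<Longrightarrow> x \<in> V i \<Longrightarrow> scaleR r x \<in> V i"
  by (metis scaleC_in scaleC_of_real)

lemma diff_in: "i < n \<Longrightarrow> x \<in> V i \<Longrightarrow> y \<in> V i \<Longrightarrow> x - y \<in> V i"
  using add_in[of i x "- y"] scaleR_in[of i y "-1"] by simp

lemma orthogonal: "i < n \<Longrightarrow> j < n \<Longrightarrow> i \<noteq> j \<Longrightarrow> x \<in> V i \<Longrightarrow> y \<in> V j \<Longrightarrow> cinner x y = 0"
  using orth_decomp unfolding orth_decomp_def by blast

lemma decomposition: "\<exists>u. (\<forall>i<n. u i \<in> V i) \<and> x = (\<Sum>i<n. u i)"
  using orth_decomp unfolding orth_decomp_def by blast

lemma proj_eqI:
  assumes i: "i < n" and y: "y \<in> V i" and orth: "\<And>v. v \<in> V i \<Longrightarrow> cinner v (x - y) = 0"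
  shows "P i x = y"
  unfolding proj_def
proof (rule the_equality)
  fix y' assume y': "y' \<in> V i \<and> (\<forall>v\<in>V i. cinner v (x - y') = 0)"
  have "y' - y \<in> V i"
    using i y y' by (simp add: diff_in)
  then have "cinner (y' - y) (y' - y) = 0"
    using orth y' by (metis cinner_diff_right diff_diff_eq2 diff_add_cancel diff_self)
  then show "y' = y"
    using norm_cinner[of "y' - y"] by simp
qed (use y orth in blast)

lemma proj_component:
  assumes u: "\<forall>j<n. u j \<in> V j" and i: "i < n"
  shows "P i (\<Sum>j<n. u j) = u i"
proof (rule proj_eqI[OF i])
  show "u i \<in> V i"
    using u i by blast
  fix v assume v: "v \<in> V i"
  have "cinner v (u j) = 0" if "j \<in> {..<n} - {i}" for j
    using that i v u by (intro orthogonal[of i j]) auto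
  moreover have "(\<Sum>j<n. u j) - u i = (\<Sum>j\<in>{..<n} - {i}. u j)"
    using i by (simp add: sum_diff1)
  ultimately show "cinner v ((\<Sum>j<n. u j) - u i) = 0"
    by (simp add: cinner_sum_right)
qed

lemma proj_in:
  assumes "i < n"
  shows "P i x \<in> V i"
proof -
  obtain u where "\<forall>j<n. u j \<in> V j" "x = (\<Sum>j<n. u j)"
    using decomposition by blast
  then show ?thesis
    using assms by (simp add: proj_component)
qed

lemma sum_proj: "(\<Sum>i<n. P i x) = x"
proof -
  obtain u where "\<forall>i<n. u i \<in> V i" "x = (\<Sum>i<n. u i)"
    using decomposition by blast
  then show ?thesis
    by (simp add: proj_component)
qed

lemma proj_fixes: "i < n \<Longrightarrow> v \<in> V i \<Longrightarrow> P i v = v"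
  by (rule proj_eqI) auto

lemma proj_vanishes: "i < n \<Longrightarrow> j < n \<Longrightarrow> i \<noteq> j \<Longrightarrow> v \<in> V j \<Longrightarrow> P i v = 0"
  by (rule proj_eqI) (auto simp: zero_in orthogonal)

lemma clinear_proj:
  assumes i: "i < n"
  shows "clinear (P i)"
proof -
  have "P i (x + y) = P i x + P i y" for x y
    using proj_component[of "\<lambda>j. P j x + P j y" i] i
    by (simp add: proj_in add_in sum.distrib sum_proj)
  moreover have "P i (scaleC c x) = scaleC c (P i x)" for c x
    using proj_component[of "\<lambda>j. scaleC c (P j x)" i] i
    by (simp add: proj_in scaleC_in sum_proj scaleC_sum_right[symmetric])
  ultimately show ?thesis
    by (simp add: clinear_def)
qed

lemma cinner_eq_sum_proj: "cinner x y = (\<Sum>i<n. cinner (P i x) (P i y))"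
proof -
  have "cinner x y = (\<Sum>i<n. \<Sum>j<n. cinner (P i x) (P j y))"
    by (simp only: cinner_sum_left[symmetric] cinner_sum_right[symmetric] sum_proj)
  also have "\<dots> = (\<Sum>i<n. \<Sum>j<n. if i = j then cinner (P i x) (P i y) else 0)"
    by (intro sum.cong refl) (auto simp: orthogonal proj_in)
  finally show ?thesis
    by simp
qed

lemma norm_squared_eq_sum_proj: "(norm x)^2 = (\<Sum>i<n. (norm (P i x))^2)"
proof -
  have "(norm x)^2 = Re (\<Sum>i<n. cinner (P i x) (P i x))"
    by (simp only: Re_cinner_self[symmetric] cinner_eq_sum_proj[of x x])
  then show ?thesis
    by (simp only: Re_sum Re_cinner_self)
qed

lemma norm_proj_le:
  assumes "i < n"
  shows "norm (P i x) \<le> norm x"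
proof -
  have "(norm (P i x))^2 \<le> (\<Sum>j<n. (norm (P j x))^2)"
    using assms by (intro member_le_sum) auto
  also have "\<dots> = (norm x)^2"
    by (rule norm_squared_eq_sum_proj[symmetric])
  finally show ?thesis
    by (rule power2_le_imp_le) simp
qed

end

section \<open>Block operators\<close>

context orthogonal_decomposition
begin

definition block_op :: "(nat \<Rightarrow> nat \<Rightarrow> 'a \<Rightarrow> 'a) \<Rightarrow> 'a \<Rightarrow> 'a" where
  "block_op K x = (\<Sum>i<n. \<Sum>j<n. K i j (P j x))"

lemma compact_operator_compose_proj:
  assumes j: "j < n" and K: "compact_op (V j) W K"
  shows "compact_operator (\<lambda>x. K (P j x))"
proof -
  let ?B = "{x \<in> V j. norm x \<le> 1}"
  have "clinear_on (V j) W K"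
    using K by (simp add: compact_op_def)
  then have "clinear (\<lambda>x. K (P j x))"
    using clinear_proj[OF j] proj_in[OF j] by (simp add: clinear_def clinear_on_def)
  moreover have "(\<lambda>x. K (P j x)) ` {x. norm x \<le> 1} \<subseteq> closure (K ` ?B)"
  proof (rule image_subsetI)
    fix x :: 'a
    assume "x \<in> {x. norm x \<le> 1}"
    then have "P j x \<in> ?B"
      using proj_in[OF j] norm_proj_le[OF j, of x] by simp
    then show "K (P j x) \<in> closure (K ` ?B)"
      by (rule closure_image_memI)
  qed
  moreover have "compact (closure (K ` ?B))"
    using K by (simp add: compact_op_def)
  ultimately show ?thesis
    unfolding compact_operator_iff using compact_closure_subset by blast
qed

lemma compact_operator_block_op:
  assumes "\<And>i j. i < n \<Longrightarrow> j < n \<Longrightarrow> compact_op (V j) (V i) (K i j)"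
  shows "compact_operator (block_op K)"
proof -
  have blocks: "compact_operator (\<lambda>x. K i j (P j x))" if "i < n" "j < n" for i j
    using that(2) assms[OF that] by (rule compact_operator_compose_proj)
  show ?thesis
    unfolding block_op_def by (rule compact_operator_sum, rule compact_operator_sum) (simp add: blocks)
qed

lemma proj_block_op:
  assumes K: "\<And>i j. i < n \<Longrightarrow> j < n \<Longrightarrow> clinear_on (V j) (V i) (K i j)"
    and i: "i < n" and j: "j < n" and y: "y \<in> V j"
  shows "P i (block_op K y) = K i j y"
proof -
  have entry: "P i (K i' j' (P j' y)) = (if j' = j then if i' = i then K i j y else 0 else 0)"
    if i': "i' < n" and j': "j' < n" for i' j'
  proof (cases "j' = j")
    case True
    have Ky: "K i' j y \<in> V i'"
      using K[OF that] y True unfolding clinear_on_def by blast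
    show ?thesis
    proof (cases "i' = i")
      case False
      then show ?thesis
        using True proj_fixes[OF j y] proj_vanishes[OF i i' _ Ky] by auto
    qed (use True proj_fixes[OF j y] proj_fixes[OF i] Ky in simp)
  next
    case False
    have "K i' j' (scaleC 0 0) = scaleC 0 (K i' j' 0)"
      using K[OF that] zero_in[OF j'] unfolding clinear_on_def by blast
    then show ?thesis
      using False proj_vanishes[OF j' j False y] clinear_zero[OF clinear_proj[OF i]] by simp
  qed
  have "P i (block_op K y) = (\<Sum>i'<n. \<Sum>j'<n. if j' = j then if i' = i then K i j y else 0 else 0)"
    unfolding block_op_def by (simp add: clinear_sum[OF clinear_proj[OF i]] entry)
  also have "\<dots> = K i j y"
    using i j by simp
  finally show ?thesis .
qed

lemma cinner_block_expansion:
  assumes "clinear T"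
  shows "cinner x (T x) = (\<Sum>i<n. \<Sum>j<n. cinner (P i x) (P i (T (P j x))))"
proof -
  have "T x = (\<Sum>j<n. T (P j x))"
    by (metis sum_proj clinear_sum[OF assms])
  then have "P i (T x) = (\<Sum>j<n. P i (T (P j x)))" if "i < n" for i
    by (simp add: clinear_sum[OF clinear_proj[OF that]])
  then show ?thesis
    by (simp add: cinner_eq_sum_proj[of x] cinner_sum_right)
qed

lemma block_form_lower_bound:
  assumes T: "clinear T"
    and diag: "\<And>i x. i < n \<Longrightarrow> x \<in> V i \<Longrightarrow> M i i * (norm x)^2 \<le> Re (cinner x (P i (T x)))"
    and off: "\<And>i j x. i < n \<Longrightarrow> j < n \<Longrightarrow> i \<noteq> j \<Longrightarrow> x \<in> V j \<Longrightarrow>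
        norm (P i (T x)) \<le> - M i j * norm x"
  shows "(\<Sum>i<n. \<Sum>j<n. M i j * norm (P i x) * norm (P j x)) \<le> Re (cinner x (T x))"
proof -
  have entry: "M i j * norm (P i x) * norm (P j x) \<le> Re (cinner (P i x) (P i (T (P j x))))"
    if ij: "i < n" "j < n" for i j
  proof (cases "i = j")
    case True
    then show ?thesis
      using diag[OF ij(1) proj_in[OF ij(1)]] by (simp add: power2_eq_square mult.assoc)
  next
    case False
    have "norm (P i x) * norm (P i (T (P j x))) \<le> norm (P i x) * (- M i j * norm (P j x))"
      by (rule mult_left_mono[OF off[OF ij False proj_in[OF ij(2)]] norm_ge_zero])
    then have "M i j * norm (P i x) * norm (P j x) \<le> - (norm (P i x) * norm (P i (T (P j x))))"
      by (simp add: algebra_simps)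
    then show ?thesis
      using Re_cinner_ge order_trans by blast
  qed
  show ?thesis
    unfolding cinner_block_expansion[OF T] Re_sum using entry by (auto intro!: sum_mono)
qed

end

section \<open>The least eigenvalue of a symmetric matrix\<close>

definition bilinear_form :: "nat \<Rightarrow> (nat \<Rightarrow> nat \<Rightarrow> real) \<Rightarrow> (nat \<Rightarrow> real) \<Rightarrow> (nat \<Rightarrow> real) \<Rightarrow> real" where
  "bilinear_form n M t u = (\<Sum>i<n. \<Sum>j<n. M i j * t i * u j)"

definition sum_squares :: "nat \<Rightarrow> (nat \<Rightarrow> real) \<Rightarrow> real" where
  "sum_squares n t = (\<Sum>i<n. (t i)^2)"

lemma finite_eigenvalues:
  "finite {\<mu>. \<exists>v::nat \<Rightarrow> real. (\<exists>i<n. v i \<noteq> 0) \<and> (\<forall>i<n. (\<Sum>j<n. M i j * v j) = \<mu> * v i)}"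
proof -
  define A where "A = Matrix.mat n n (\<lambda>(i, j). M i j)"
  have A: "A \<in> carrier_mat n n"
    by (simp add: A_def)
  have "char_poly A \<noteq> 0"
    using degree_monic_char_poly[OF A] by auto
  then have finite_A: "finite {k. eigenvalue A k}"
    using eigenvalue_root_char_poly[OF A] poly_roots_finite by auto
  have "eigenvalue A \<mu>" if "\<exists>i<n. v i \<noteq> 0" "\<forall>i<n. (\<Sum>j<n. M i j * v j) = \<mu> * v i"
    for \<mu> v
  proof -
    define w where "w = Matrix.vec n v"
    have "w \<in> carrier_vec n"
      by (simp add: w_def)
    moreover have "w \<noteq> 0\<^sub>v n"
      using that(1) unfolding w_def by (metis index_vec index_zero_vec(1))
    moreover have "A *\<^sub>v w = \<mu> \<cdot>\<^sub>v w"
    proof (rule eq_vecI)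
      fix i assume "i < dim_vec (\<mu> \<cdot>\<^sub>v w)"
      then have "i < n"
        by (simp add: w_def)
      then show "(A *\<^sub>v w) $ i = (\<mu> \<cdot>\<^sub>v w) $ i"
        using that(2) A unfolding A_def w_def by (simp add: scalar_prod_def atLeast0LessThan)
    qed (simp add: A_def w_def)
    ultimately show ?thesis
      unfolding eigenvalue_def eigenvector_def using A by blast
  qed
  then have "{\<mu>. \<exists>v::nat \<Rightarrow> real. (\<exists>i<n. v i \<noteq> 0) \<and> (\<forall>i<n. (\<Sum>j<n. M i j * v j) = \<mu> * v i)}
      \<subseteq> {k. eigenvalue A k}"
    by blast
  then show ?thesis
    using finite_A by (rule finite_subset)
qed

lemma min_eig_le:
  assumes "\<exists>i<n. v i \<noteq> 0" "\<forall>i<n. (\<Sum>j<n. M i j * v j) = \<mu> * v i"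
  shows "min_eig n M \<le> \<mu>"
  unfolding min_eig_def using assms by (intro Min_le finite_eigenvalues) blast

lemma bilinear_form_add_scaled:
  "bilinear_form n M (\<lambda>i. t i + s * e i) (\<lambda>i. t i + s * e i) = bilinear_form n M t t
     + s * bilinear_form n M t e + s * bilinear_form n M e t + s^2 * bilinear_form n M e e"
proof -
  have "bilinear_form n M (\<lambda>i. t i + s * e i) (\<lambda>i. t i + s * e i) =
      (\<Sum>i<n. \<Sum>j<n. M i j * t i * t j + s * (M i j * t i * e j) + s * (M i j * e i * t j)
        + s^2 * (M i j * e i * e j))"
    unfolding bilinear_form_def by (intro sum.cong refl) (simp add: algebra_simps power2_eq_square)
  then show ?thesis
    by (simp add: bilinear_form_def sum.distrib sum_distrib_left)
qed

lemma bilinear_form_unit_right: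
  "k < n \<Longrightarrow> bilinear_form n M t (\<lambda>j. if j = k then 1 else 0) = (\<Sum>i<n. M i k * t i)"
  unfolding bilinear_form_def by (simp add: if_distrib[of "\<lambda>x. _ * x"] cong: if_cong)

lemma bilinear_form_unit_left:
  assumes k: "k < n"
  shows "bilinear_form n M (\<lambda>i. if i = k then 1 else 0) t = (\<Sum>j<n. M k j * t j)"
proof -
  have "bilinear_form n M (\<lambda>i. if i = k then 1 else 0) t =
      (\<Sum>i<n. (if i = k then 1 else 0) * (\<Sum>j<n. M i j * t j))"
    unfolding bilinear_form_def sum_distrib_left by (intro sum.cong refl) (simp add: ac_simps)
  then show ?thesis
    using k by (simp add: if_distrib[of "\<lambda>x. x * _"] cong: if_cong)
qed

lemma linear_coeff_zero_if_nonneg: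
  fixes b d :: real
  assumes "\<And>s. 0 \<le> s * b + s^2 * d"
  shows "b = 0"
proof (rule ccontr)
  assume "b \<noteq> 0"
  define D where "D = \<bar>d\<bar> + 1"
  have D: "D > 0" "d - D < 0"
    by (auto simp: D_def)
  have "(- b / D) * b + (- b / D)^2 * d = b^2 * (d - D) / D^2"
    using D by (simp add: field_simps power2_eq_square)
  also have "\<dots> < 0"
    using \<open>b \<noteq> 0\<close> D by (intro divide_neg_pos mult_pos_neg) auto
  finally show False
    using assms[of "- b / D"] by simp
qed

lemma nonneg_form_zero_imp_null:
  assumes sym: "\<And>i j. i < n \<Longrightarrow> j < n \<Longrightarrow> N i j = N j i"
    and nonneg: "\<And>t. 0 \<le> bilinear_form n N t t" and zero: "bilinear_form n N t t = 0"
    and k: "k < n"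
  shows "(\<Sum>j<n. N k j * t j) = 0"
proof -
  define e where "e i = (if i = k then 1 else 0 :: real)" for i
  have "bilinear_form n N t e = (\<Sum>j<n. N k j * t j)"
    unfolding e_def bilinear_form_unit_right[OF k] using sym k by (intro sum.cong refl) auto
  moreover have "bilinear_form n N e t = (\<Sum>j<n. N k j * t j)"
    unfolding e_def by (rule bilinear_form_unit_left[OF k])
  ultimately have "0 \<le> s * (2 * (\<Sum>j<n. N k j * t j)) + s^2 * bilinear_form n N e e" for s
    using nonneg[of "\<lambda>i. t i + s * e i"] by (simp add: bilinear_form_add_scaled zero algebra_simps)
  then show ?thesis
    using linear_coeff_zero_if_nonneg by fastforce
qed

lemma exists_minimizer_on_sphere:
  assumes "n \<ge> 1"
  obtains t0 where "sum_squares n t0 = 1" "\<And>t. sum_squares n t = 1 \<Longrightarrow> bilinear_form n M t0 t0 \<le> bilinear_form n M t t"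
proof -
  let ?trunc = "\<lambda>t i. if i < n then t i else 0"
  define S where "S = (PiE UNIV (\<lambda>i. if i < n then {-1..1::real} else {0})) \<inter> {t. sum_squares n t = 1}"
  have cont: "continuous_on A (\<lambda>t::nat \<Rightarrow> real. t i)" for A i
    by (rule continuous_on_subset[OF continuous_on_product_coordinates]) simp
  have "compactin (product_topology (\<lambda>i. euclidean) UNIV) (PiE UNIV (\<lambda>i. if i < n then {-1..1::real} else {0}))"
    by (subst compactin_PiE) auto
  moreover have "closed {t. sum_squares n t = 1}"
    unfolding sum_squares_def by (intro closed_Collect_eq continuous_intros cont)
  ultimately have "compact S"
    unfolding S_def by (intro compact_Int_closed) (simp_all add: euclidean_product_topology)
  have trunc: "?trunc t \<in> S" if "sum_squares n t = 1" for t
  proof -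
    have "(t i)^2 \<le> 1" if "i < n" for i
      using member_le_sum[of i "{..<n}" "\<lambda>i. (t i)^2"] that \<open>sum_squares n t = 1\<close>
      by (simp add: sum_squares_def)
    moreover have "sum_squares n (?trunc t) = sum_squares n t"
      unfolding sum_squares_def by (intro sum.cong) auto
    ultimately show ?thesis
      using that by (auto simp: S_def PiE_def abs_le_iff abs_square_le_1)
  qed
  have "sum_squares n (\<lambda>i. if i = 0 then 1 else 0) = 1"
    using assms by (simp add: sum_squares_def if_distrib[of "\<lambda>x. x^2"] cong: if_cong)
  then have "S \<noteq> {}"
    using trunc by blast
  moreover have "continuous_on S (\<lambda>t. bilinear_form n M t t)"
    unfolding bilinear_form_def by (intro continuous_intros cont)
  ultimately obtain t0 where t0: "t0 \<in> S" "\<forall>t\<in>S. bilinear_form n M t0 t0 \<le> bilinear_form n M t t"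
    using continuous_attains_inf[OF \<open>compact S\<close>] by blast
  have trunc_form: "bilinear_form n M (?trunc t) (?trunc t) = bilinear_form n M t t" for t
    unfolding bilinear_form_def by (intro sum.cong refl) auto
  show thesis
  proof (rule that)
    show "sum_squares n t0 = 1"
      using t0(1) by (simp add: S_def)
    fix t assume "sum_squares n t = 1"
    then have "bilinear_form n M t0 t0 \<le> bilinear_form n M (?trunc t) (?trunc t)"
      using t0(2) trunc by blast
    then show "bilinear_form n M t0 t0 \<le> bilinear_form n M t t"
      by (simp only: trunc_form)
  qed
qed

lemma sphere_min_le_rayleigh:
  assumes min: "\<And>t. sum_squares n t = 1 \<Longrightarrow> \<mu> \<le> bilinear_form n M t t"
  shows "\<mu> * sum_squares n t \<le> bilinear_form n M t t"
proof (cases "sum_squares n t = 0")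
  case True
  then have "\<forall>i<n. t i = 0"
    by (simp add: sum_squares_def sum_nonneg_eq_0_iff)
  then show ?thesis
    using True by (simp add: bilinear_form_def)
next
  case False
  define r where "r = sqrt (sum_squares n t)"
  have r: "r > 0" "r^2 = sum_squares n t"
    using False sum_nonneg[of "{..<n}" "\<lambda>i. (t i)^2"] by (auto simp: r_def sum_squares_def)
  have "sum_squares n (\<lambda>i. t i / r) = 1"
    using r False by (simp add: sum_squares_def power_divide sum_divide_distrib[symmetric])
  moreover have "bilinear_form n M (\<lambda>i. t i / r) (\<lambda>i. t i / r) = bilinear_form n M t t / r^2"
    unfolding bilinear_form_def by (simp add: sum_divide_distrib power2_eq_square)
  ultimately have "\<mu> \<le> bilinear_form n M t t / r^2"
    using min by metis
  then have "\<mu> * r^2 \<le> bilinear_form n M t t"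
    using r(1) by (simp add: pos_le_divide_eq)
  then show ?thesis
    by (simp only: r(2))
qed

lemma rayleigh_minimizer_eigenvector:
  assumes sym: "\<And>i j. i < n \<Longrightarrow> j < n \<Longrightarrow> M i j = M j i"
    and ray: "\<And>t. \<mu> * sum_squares n t \<le> bilinear_form n M t t"
    and t0: "bilinear_form n M t0 t0 = \<mu> * sum_squares n t0" and k: "k < n"
  shows "(\<Sum>j<n. M k j * t0 j) = \<mu> * t0 k"
proof -
  define N where "N i j = M i j - (if i = j then \<mu> else 0)" for i j
  have form_N: "bilinear_form n N t t = bilinear_form n M t t - \<mu> * sum_squares n t" for t
  proof -
    have "bilinear_form n N t t = (\<Sum>i<n. \<Sum>j<n. M i j * t i * t j - (if i = j then \<mu> * t i * t j else 0))"
      unfolding bilinear_form_def N_def by (intro sum.cong refl) (simp add: algebra_simps)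
    then show ?thesis
      by (simp add: bilinear_form_def sum_squares_def sum_subtractf sum_distrib_left power2_eq_square mult.assoc)
  qed
  have N_sym: "N i j = N j i" if "i < n" "j < n" for i j
    using sym[OF that] by (simp add: N_def)
  have N_nonneg: "0 \<le> bilinear_form n N t t" for t
    using ray[of t] by (simp add: form_N)
  have N_zero: "bilinear_form n N t0 t0 = 0"
    using t0 by (simp add: form_N)
  have "(\<Sum>j<n. N k j * t0 j) = (\<Sum>j<n. M k j * t0 j - (if j = k then \<mu> * t0 j else 0))"
    unfolding N_def by (intro sum.cong refl) (auto simp: algebra_simps)
  also have "\<dots> = (\<Sum>j<n. M k j * t0 j) - \<mu> * t0 k"
    using k by (simp add: sum_subtractf)
  finally show ?thesis
    using nonneg_form_zero_imp_null[OF N_sym N_nonneg N_zero k] by simp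
qed

lemma min_eig_le_rayleigh:
  assumes n: "n \<ge> 1" and sym: "\<And>i j. i < n \<Longrightarrow> j < n \<Longrightarrow> M i j = M j i"
  shows "min_eig n M * sum_squares n t \<le> bilinear_form n M t t"
proof -
  obtain t0 where t0: "sum_squares n t0 = 1"
    "\<And>t. sum_squares n t = 1 \<Longrightarrow> bilinear_form n M t0 t0 \<le> bilinear_form n M t t"
    using exists_minimizer_on_sphere[OF n] by blast
  define \<mu> where "\<mu> = bilinear_form n M t0 t0"
  have ray: "\<mu> * sum_squares n t \<le> bilinear_form n M t t" for t
    using t0(2) unfolding \<mu>_def by (rule sphere_min_le_rayleigh)
  have t0_eq: "bilinear_form n M t0 t0 = \<mu> * sum_squares n t0"
    unfolding \<mu>_def t0(1) by simp
  have "(\<Sum>j<n. M k j * t0 j) = \<mu> * t0 k" if "k < n" for k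
    using sym ray t0_eq that by (rule rayleigh_minimizer_eigenvector)
  moreover have "\<exists>i<n. t0 i \<noteq> 0"
  proof (rule ccontr)
    assume "\<not> (\<exists>i<n. t0 i \<noteq> 0)"
    then have "sum_squares n t0 = 0"
      by (simp add: sum_squares_def)
    then show False
      using t0(1) by simp
  qed
  ultimately have "min_eig n M \<le> \<mu>"
    by (intro min_eig_le[where v=t0]) auto
  then show ?thesis
    using order_trans[OF mult_right_mono ray] sum_nonneg[of "{..<n}" "\<lambda>i. (t i)^2"]
    by (simp add: sum_squares_def)
qed

section \<open>Compact corrections of the blocks\<close>

lemma ess_min_approx:
  assumes a: "ereal a \<le> ess_min V C" and \<epsilon>: "\<epsilon> > 0"
  obtains K where "compact_op V V K"
    "\<And>x. x \<in> V \<Longrightarrow> (a - \<epsilon>) * (norm x)^2 \<le> Re (cinner x (C x + K x))"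
proof -
  define S where "S = {m. \<exists>K. compact_op V V K \<and> selfadj_on V K \<and>
       (\<forall>x\<in>V. m * (norm x)^2 \<le> Re (cinner x (C x + K x)))}"
  have "ereal (a - \<epsilon>) < ereal a"
    using \<epsilon> by simp
  also have "\<dots> \<le> Sup (ereal ` S)"
    using a unfolding ess_min_def S_def .
  finally obtain m where "m \<in> S" "a - \<epsilon> < m"
    by (auto simp: less_Sup_iff)
  then obtain K where K: "compact_op V V K" "\<And>x. x \<in> V \<Longrightarrow> m * (norm x)^2 \<le> Re (cinner x (C x + K x))"
    unfolding S_def by blast
  have "(a - \<epsilon>) * (norm x)^2 \<le> Re (cinner x (C x + K x))" if "x \<in> V" for x
    using order_trans[OF mult_right_mono[OF less_imp_le[OF \<open>a - \<epsilon> < m\<close>]] K(2)[OF that]] by simp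
  with K(1) show thesis
    by (rule that)
qed

lemma norm_le_opnorm_on:
  assumes hom: "\<And>x r. x \<in> V \<Longrightarrow> scaleR r x \<in> V \<and> T (scaleR r x) = scaleR r (T x)"
    and bound: "\<And>x. x \<in> V \<Longrightarrow> norm (T x) \<le> C * norm x" and x: "x \<in> V"
  shows "norm (T x) \<le> opnorm_on V T * norm x"
proof (rule homogeneous_bound[OF hom _ x])
  fix y assume y: "y \<in> V" "norm y \<le> 1"
  have "norm (T u) \<le> max C 0" if "u \<in> V" "norm u \<le> 1" for u
    using order_trans[OF bound[OF that(1)] mult_mono[of C "max C 0" "norm u" 1]] that by simp
  then have "bdd_above ((\<lambda>x. norm (T x)) ` {x\<in>V. norm x \<le> 1})"
    by (intro bdd_aboveI2[where M="max C 0"]) auto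
  then show "norm (T y) \<le> opnorm_on V T"
    unfolding opnorm_on_def using y by (auto intro: cSup_upper)
qed

lemma ess_norm_approx:
  assumes b: "ess_norm V W T \<le> b" and \<epsilon>: "\<epsilon> > 0" and W: "0 \<in> W"
    and V: "\<And>x r. x \<in> V \<Longrightarrow> scaleR r x \<in> V"
    and hom: "\<And>x r. x \<in> V \<Longrightarrow> T (scaleR r x) = scaleR r (T x)"
    and bound: "\<And>x. x \<in> V \<Longrightarrow> norm (T x) \<le> C * norm x"
  obtains K where "compact_op V W K" "\<And>x. x \<in> V \<Longrightarrow> norm (T x + K x) \<le> (b + \<epsilon>) * norm x"
proof -
  define X where "X = (\<lambda>K. opnorm_on V (\<lambda>x. T x + K x)) ` {K. compact_op V W K}"
  have "X \<noteq> {}"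
    unfolding X_def using compact_op_zero[OF W] by blast
  moreover have "Inf X < b + \<epsilon>"
    using b \<epsilon> unfolding ess_norm_def X_def by simp
  ultimately obtain r where "r \<in> X" "r < b + \<epsilon>"
    by (meson cInf_lessD)
  then obtain K where K: "compact_op V W K" "opnorm_on V (\<lambda>x. T x + K x) < b + \<epsilon>"
    unfolding X_def by blast
  obtain CK where CK: "\<forall>x\<in>V. norm (K x) \<le> CK * norm x"
    using compact_op_bounded[OF K(1) V] by blast
  have homK: "K (scaleR r x) = scaleR r (K x)" if "x \<in> V" for x r
    using K(1) that unfolding compact_op_def clinear_on_def by (metis scaleC_of_real)
  have "norm (T x + K x) \<le> (C + CK) * norm x" if "x \<in> V" for x
    using norm_triangle_le[OF add_mono[OF bound[OF that] bspec[OF CK that]]]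
    by (simp add: distrib_right)
  then have "norm (T x + K x) \<le> opnorm_on V (\<lambda>x. T x + K x) * norm x" if "x \<in> V" for x
    using that V by (intro norm_le_opnorm_on) (auto simp: hom homK scaleR_add_right)
  then have "norm (T x + K x) \<le> (b + \<epsilon>) * norm x" if "x \<in> V" for x
    using that order_trans mult_right_mono[OF less_imp_le[OF K(2)] norm_ge_zero] by blast
  with K(1) show thesis
    by (rule that)
qed

lemma sum_products_le_card_sum_squares:
  fixes t :: "nat \<Rightarrow> real"
  shows "(\<Sum>i<n. \<Sum>j<n. t i * t j) \<le> real n * (\<Sum>i<n. (t i)^2)"
proof -
  have "t i * t j \<le> ((t i)^2 + (t j)^2) / 2" for i j
    using sum_squares_bound[of "t i" "t j"] by simp
  then have "(\<Sum>i<n. \<Sum>j<n. t i * t j) \<le> (\<Sum>i<n. \<Sum>j<n. ((t i)^2 + (t j)^2) / 2)"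
    by (intro sum_mono)
  also have "\<dots> = real n * (\<Sum>i<n. (t i)^2)"
    by (simp add: sum.distrib sum_divide_distrib[symmetric] sum_distrib_left[symmetric] add_divide_distrib)
  finally show ?thesis .
qed

context orthogonal_decomposition
begin

lemma compact_block_corrections:
  assumes A: "bounded_op A" and \<epsilon>: "\<epsilon> > 0"
    and diag: "\<forall>i<n. ereal (a i) \<le> ess_min (V i) (\<lambda>x. P i (A x))"
    and off: "\<forall>i<n. \<forall>j<n. i \<noteq> j \<longrightarrow> ess_norm (V j) (V i) (\<lambda>x. P i (A x)) \<le> b i j"
  obtains K where "\<And>i j. i < n \<Longrightarrow> j < n \<Longrightarrow> compact_op (V j) (V i) (K i j)"
    "\<And>i x. i < n \<Longrightarrow> x \<in> V i \<Longrightarrow> (a i - \<epsilon>) * (norm x)^2 \<le> Re (cinner x (P i (A x) + K i i x))"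
    "\<And>i j x. i < n \<Longrightarrow> j < n \<Longrightarrow> i \<noteq> j \<Longrightarrow> x \<in> V j \<Longrightarrow>
       norm (P i (A x) + K i j x) \<le> (b i j + \<epsilon>) * norm x"
proof -
  obtain C where C: "\<And>x. norm (A x) \<le> C * norm x"
    using bounded_op_bound[OF A] by blast
  have "\<exists>L. i < n \<longrightarrow> j < n \<longrightarrow> compact_op (V j) (V i) L \<and>
      (i = j \<longrightarrow> (\<forall>x\<in>V i. (a i - \<epsilon>) * (norm x)^2 \<le> Re (cinner x (P i (A x) + L x)))) \<and>
      (i \<noteq> j \<longrightarrow> (\<forall>x\<in>V j. norm (P i (A x) + L x) \<le> (b i j + \<epsilon>) * norm x))" for i j
  proof (cases "i < n \<and> j < n")
    case True
    show ?thesis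
    proof (cases "i = j")
      case True
      with \<open>i < n \<and> j < n\<close> show ?thesis
        using ess_min_approx[OF diag[rule_format, of i] \<epsilon>] by metis
    next
      case False
      have "norm (P i (A x)) \<le> C * norm x" for x
        using order_trans[OF norm_proj_le C] True by blast
      moreover have "P i (A (scaleR r x)) = scaleR r (P i (A x))" for x r
        using True A by (simp add: clinear_scaleR bounded_op_clinear clinear_proj)
      ultimately show ?thesis
        using ess_norm_approx[OF off[rule_format, of i j] \<epsilon> zero_in, of C] True False scaleR_in
        by metis
    qed
  qed simp
  then obtain K where "\<forall>i j. i < n \<longrightarrow> j < n \<longrightarrow> compact_op (V j) (V i) (K i j) \<and>
      (i = j \<longrightarrow> (\<forall>x\<in>V i. (a i - \<epsilon>) * (norm x)^2 \<le> Re (cinner x (P i (A x) + K i j x)))) \<and>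
      (i \<noteq> j \<longrightarrow> (\<forall>x\<in>V j. norm (P i (A x) + K i j x) \<le> (b i j + \<epsilon>) * norm x))"
    by metis
  then show thesis
    by (intro that) auto
qed

lemma block_corrected_form_lower_bound:
  assumes A: "clinear A" and \<epsilon>: "\<epsilon> \<ge> 0"
    and K: "\<And>i j. i < n \<Longrightarrow> j < n \<Longrightarrow> compact_op (V j) (V i) (K i j)"
    and diag: "\<And>i x. i < n \<Longrightarrow> x \<in> V i \<Longrightarrow> (a i - \<epsilon>) * (norm x)^2 \<le> Re (cinner x (P i (A x) + K i i x))"
    and off: "\<And>i j x. i < n \<Longrightarrow> j < n \<Longrightarrow> i \<noteq> j \<Longrightarrow> x \<in> V j \<Longrightarrow>
       norm (P i (A x) + K i j x) \<le> (b i j + \<epsilon>) * norm x"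
    and M: "\<And>t. \<mu> * (\<Sum>i<n. (t i)^2) \<le> (\<Sum>i<n. \<Sum>j<n. (if i = j then a i else - b i j) * t i * t j)"
  shows "(\<mu> - real n * \<epsilon>) * (norm x)^2 \<le> Re (cinner x (A x + block_op K x))"
proof -
  define t where "t i = norm (P i x)" for i
  have linK: "clinear_on (V j) (V i) (K i j)" if "i < n" "j < n" for i j
    using K[OF that] by (simp add: compact_op_def)
  have block: "P i (A y + block_op K y) = P i (A y) + K i j y" if "i < n" "j < n" "y \<in> V j" for i j y
    using proj_block_op[OF linK that] clinear_add[OF clinear_proj[OF that(1)]] by simp
  have "clinear (\<lambda>x. A x + block_op K x)"
    using A compact_operator_block_op[OF K] by (auto simp: clinear_def compact_operator_iff scaleC_add_right)
  then have lower: "(\<Sum>i<n. \<Sum>j<n. (if i = j then a i - \<epsilon> else - (b i j + \<epsilon>)) * t i * t j)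
      \<le> Re (cinner x (A x + block_op K x))"
    unfolding t_def
  proof (rule block_form_lower_bound)
    fix i y assume "i < n" "y \<in> V i"
    then show "(if i = i then a i - \<epsilon> else - (b i i + \<epsilon>)) * (norm y)^2
        \<le> Re (cinner y (P i (A y + block_op K y)))"
      using diag by (simp add: block)
  next
    fix i j y assume "i < n" "j < n" "i \<noteq> j" "y \<in> V j"
    then show "norm (P i (A y + block_op K y)) \<le> - (if i = j then a i - \<epsilon> else - (b i j + \<epsilon>)) * norm y"
      using off by (simp add: block add.commute)
  qed
  have perturbed: "(\<Sum>i<n. \<Sum>j<n. (if i = j then a i - \<epsilon> else - (b i j + \<epsilon>)) * t i * t j)
      = (\<Sum>i<n. \<Sum>j<n. (if i = j then a i else - b i j) * t i * t j) - \<epsilon> * (\<Sum>i<n. \<Sum>j<n. t i * t j)"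
  proof -
    have "(if i = j then a i - \<epsilon> else - (b i j + \<epsilon>)) * t i * t j
        = (if i = j then a i else - b i j) * t i * t j - \<epsilon> * (t i * t j)" for i j
      by (simp add: algebra_simps)
    then show ?thesis
      by (simp add: sum_subtractf sum_distrib_left)
  qed
  have "(norm x)^2 = (\<Sum>i<n. (t i)^2)"
    unfolding t_def by (rule norm_squared_eq_sum_proj)
  then have "(\<mu> - real n * \<epsilon>) * (norm x)^2
      = \<mu> * (\<Sum>i<n. (t i)^2) - \<epsilon> * (real n * (\<Sum>i<n. (t i)^2))"
    by (simp add: algebra_simps)
  also have "\<dots> \<le> (\<Sum>i<n. \<Sum>j<n. (if i = j then a i else - b i j) * t i * t j)
      - \<epsilon> * (\<Sum>i<n. \<Sum>j<n. t i * t j)"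
    using M[of t] mult_left_mono[OF sum_products_le_card_sum_squares[where t=t and n=n] \<epsilon>] by linarith
  also have "\<dots> \<le> Re (cinner x (A x + block_op K x))"
    using lower perturbed by simp
  finally show ?thesis .
qed

lemma not_in_ess_spectrum_below:
  assumes n: "n \<ge> 1" and A: "bounded_op A"
    and diag: "\<forall>i<n. ereal (a i) \<le> ess_min (V i) (\<lambda>x. P i (A x))"
    and off: "\<forall>i<n. \<forall>j<n. i \<noteq> j \<longrightarrow> ess_norm (V j) (V i) (\<lambda>x. P i (A x)) \<le> b i j"
    and M: "\<And>t. \<mu> * (\<Sum>i<n. (t i)^2) \<le> (\<Sum>i<n. \<Sum>j<n. (if i = j then a i else - b i j) * t i * t j)"
    and z: "Re z < \<mu>"
  shows "z \<notin> ess_spectrum A"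
proof -
  define \<epsilon> where "\<epsilon> = (\<mu> - Re z) / (2 * real n)"
  have \<epsilon>: "\<epsilon> > 0" "\<mu> - real n * \<epsilon> - Re z = (\<mu> - Re z) / 2"
    using n z by (simp_all add: \<epsilon>_def field_simps)
  obtain K where K: "\<And>i j. i < n \<Longrightarrow> j < n \<Longrightarrow> compact_op (V j) (V i) (K i j)"
    "\<And>i x. i < n \<Longrightarrow> x \<in> V i \<Longrightarrow> (a i - \<epsilon>) * (norm x)^2 \<le> Re (cinner x (P i (A x) + K i i x))"
    "\<And>i j x. i < n \<Longrightarrow> j < n \<Longrightarrow> i \<noteq> j \<Longrightarrow> x \<in> V j \<Longrightarrow>
       norm (P i (A x) + K i j x) \<le> (b i j + \<epsilon>) * norm x"
    using compact_block_corrections[OF A \<epsilon>(1) diag off] by blast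
  show ?thesis
  proof (rule not_in_ess_spectrum_if_coercive[OF A compact_operator_block_op[OF K(1)]])
    fix x
    have "(\<mu> - real n * \<epsilon>) * (norm x)^2 \<le> Re (cinner x (A x + block_op K x))"
      using bounded_op_clinear[OF A] \<epsilon>(1) K M by (intro block_corrected_form_lower_bound) auto
    then show "(\<mu> - Re z) / 2 * (norm x)^2 \<le> Re (1 * cinner x (A x + block_op K x - scaleC z x))"
      using \<epsilon>(2) by (simp add: cinner_diff_right cinner_scaleC_right algebra_simps flip: norm_cinner)
  qed (use z in simp_all)
qed

end

theorem lemma2:
  fixes n :: nat and V :: "nat \<Rightarrow> 'a::complex_hilbert set" and A :: "'a \<Rightarrow> 'a"
    and a :: "nat \<Rightarrow> real" and b :: "nat \<Rightarrow> nat \<Rightarrow> real"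
  assumes "n \<ge> 1"
    and "orth_decomp n V"
    and "bounded_on UNIV UNIV A"
    and "selfadj_on UNIV A"
    and "\<forall>i<n. \<forall>j<n. i \<noteq> j \<longrightarrow> b i j = b j i"
    and "\<forall>i<n. ereal (a i) \<le> ess_min (V i) (\<lambda>x. proj (V i) (A x))"
    and "\<forall>i<n. \<forall>j<n. i \<noteq> j \<longrightarrow> ess_norm (V j) (V i) (\<lambda>x. proj (V i) (A x)) \<le> b i j"
  shows "\<forall>z\<in>ess_spectrum A. Im z = 0 \<and>
           min_eig n (\<lambda>i j. if i = j then a i else - b i j) \<le> Re z"
proof
  interpret orthogonal_decomposition n V
    by unfold_locales (rule assms(2))
  let ?M = "\<lambda>i j. if i = j then a i else - b i j"
  have "?M i j = ?M j i" if "i < n" "j < n" for i j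
    using assms(5) that by auto
  then have "min_eig n ?M * sum_squares n t \<le> bilinear_form n ?M t t" for t
    by (rule min_eig_le_rayleigh[OF assms(1)])
  then have rayleigh: "min_eig n ?M * (\<Sum>i<n. (t i)^2) \<le> (\<Sum>i<n. \<Sum>j<n. ?M i j * t i * t j)" for t
    unfolding sum_squares_def bilinear_form_def .
  fix z assume z: "z \<in> ess_spectrum A"
  then have "Im z = 0"
    using nonreal_not_in_ess_spectrum[OF assms(3,4)] by blast
  moreover have "\<not> Re z < min_eig n ?M"
    using not_in_ess_spectrum_below[OF assms(1,3,6,7) rayleigh] z by blast
  ultimately show "Im z = 0 \<and> min_eig n ?M \<le> Re z"
    by (simp add: not_less)
qed

end
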